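(* Let $n\ge2$ and $\sigma\ge0$, and let $\mathbf p_{n,\sigma}$ be a unit eigenvector of $\mathbf A_\sigma^{-1}\mathbf B$ associated with its unique negative eigenvalue. (i) For $\sigma=0$ we have $\mathbf p_{n,0}=\pm(0,\dots,0,1)^T$. (ii) For $\sigma>0$ all entries of $\mathbf p_{n,\sigma}$ are nonzero and have the same sign. More precisely, $p_{k,n,\sigma}=b_1(r^k+r^{n-k})$ for $k=1,\dots,n$, with some $r>1$ and $b_1\ne0$ depending on $\sigma$. (iii) Consequently, for any $\sigma,\sigma'\ge0$ we have $\mathbf p_{n,\sigma}\cdot\mathbf p_{n,\sigma'}\neq0$.
   Context: Let $\mathbf L\in\mathbb R^{n\times n}$ be the periodic discrete one-dimensional Laplacian, i.e. $(\mathbf L\mathbf x)_i=x_{i-1}-2x_i+x_{i+1}$ with indices taken modulo $n$. For $\sigma\ge 0$ set $\mathbf A_\sigma=\mathbf I-\sigma\mathbf L$. Let $\mathbf B=\mathrm{diag}(1,\dots,1,-1)\in\mathbb R^{n\times n}$. The matrix $\mathbf A_\sigma^{-1}\mathbf B$ is diagonalizable with real eigenvalues, exactly one of which is negative. *)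

theory Defs
  imports "Jordan_Normal_Form.Char_Poly" "Jordan_Normal_Form.Gauss_Jordan_Elimination"
begin

text \<open>Indices of vectors/matrices are 0-based: paper index k (1..n) corresponds to k-1.
  Periodic discrete Laplacian: (L x)_i = x_(i-1) - 2 x_i + x_(i+1), indices mod n.\<close>
definition lap_mat :: "nat \<Rightarrow> real mat" where
  "lap_mat n = mat n n (\<lambda>(i,j).
      (if j = i then -2 else 0)
    + (if j = (i + 1) mod n then 1 else 0)
    + (if j = (i + n - 1) mod n then 1 else 0))"

definition A_mat :: "nat \<Rightarrow> real \<Rightarrow> real mat" where
  "A_mat n \<sigma> = 1\<^sub>m n - \<sigma> \<cdot>\<^sub>m lap_mat n"

definition B_mat :: "nat \<Rightarrow> real mat" where
  "B_mat n = mat n n (\<lambda>(i,j). if i = j then (if i = n - 1 then -1 else 1) else 0)"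

text \<open>The matrix A_sigma^(-1) B (A_sigma is invertible for sigma >= 0).\<close>
definition AinvB :: "nat \<Rightarrow> real \<Rightarrow> real mat" where
  "AinvB n \<sigma> = the (mat_inverse (A_mat n \<sigma>)) * B_mat n"

definition neg_unit_eigvec :: "nat \<Rightarrow> real \<Rightarrow> real vec \<Rightarrow> bool" where
  "neg_unit_eigvec n \<sigma> p \<longleftrightarrow>
     (\<exists>ev. ev < 0 \<and> eigenvector (AinvB n \<sigma>) p ev) \<and> p \<bullet> p = 1"

end

theory Submission
  imports Defs
begin

text \<open>Off the last row, the eigenvalue equation \<open>B p = \<mu> A p\<close> is the three-term recurrence
  \<open>p\<^sub>k\<^sub>+\<^sub>1 = c p\<^sub>k - p\<^sub>k\<^sub>-\<^sub>1\<close> with \<open>c = 2 + (1 - 1/\<mu>)/\<sigma>\<close>, and \<open>c > 2\<close> because \<open>\<mu> < 0\<close>.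
  Its solutions are \<open>a r\<^sup>k + b r\<^sup>-\<^sup>k\<close> with \<open>r + 1/r = c\<close>, \<open>r > 1\<close>; periodicity of the index
  forces \<open>b = a r\<^sup>n\<close>, giving \<open>p\<^sub>k = a (r\<^sup>k + r\<^sup>n\<^sup>-\<^sup>k)\<close>, a vector of constant sign.
  For \<open>\<sigma> = 0\<close> the equation decouples and only the last coordinate survives.
  In both cases \<open>\<plusminus>p\<close> is nonnegative with positive last entry, so any two such vectors have
  nonzero scalar product.\<close>

lemma mat_mult_vec_nth:
  "i < n \<Longrightarrow> v \<in> carrier_vec n \<Longrightarrow> (mat n n f *\<^sub>v v) $ i = (\<Sum>j<n. f (i, j) * v $ j)"
  by (auto simp: scalar_prod_def row_def lessThan_atLeast0 intro!: sum.cong)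

lemma A_mat_carrier: "A_mat n \<sigma> \<in> carrier_mat n n"
  unfolding A_mat_def lap_mat_def by auto

lemma B_mat_carrier: "B_mat n \<in> carrier_mat n n"
  unfolding B_mat_def by auto

lemma A_mat_mult_vec_nth:
  assumes "i < n" "v \<in> carrier_vec n"
  shows "(A_mat n \<sigma> *\<^sub>v v) $ i =
    (1 + 2 * \<sigma>) * v $ i - \<sigma> * (v $ ((i + n - 1) mod n) + v $ ((i + 1) mod n))"
proof -
  have A_eq: "A_mat n \<sigma> = mat n n (\<lambda>(i, j). (1 + 2 * \<sigma>) * (if j = i then 1 else 0)
      - \<sigma> * (if j = (i + 1) mod n then 1 else 0) - \<sigma> * (if j = (i + n - 1) mod n then 1 else 0))"
    unfolding A_mat_def lap_mat_def by (rule eq_matI) (auto simp: algebra_simps)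
  have "(A_mat n \<sigma> *\<^sub>v v) $ i = (\<Sum>j<n. (1 + 2 * \<sigma>) * (if j = i then v $ j else 0)
      - \<sigma> * (if j = (i + 1) mod n then v $ j else 0)
      - \<sigma> * (if j = (i + n - 1) mod n then v $ j else 0))"
    unfolding A_eq using assms by (subst mat_mult_vec_nth) (auto simp: algebra_simps intro!: sum.cong)
  then show ?thesis
    using assms by (simp only: sum_subtractf sum_distrib_left[symmetric])
      (simp add: algebra_simps gr_implies_not0)
qed

lemma B_mat_mult_vec_nth:
  assumes "i < n" "v \<in> carrier_vec n"
  shows "(B_mat n *\<^sub>v v) $ i = (if i = n - 1 then - v $ i else v $ i)"
proof -
  have "(B_mat n *\<^sub>v v) $ i = (\<Sum>j<n. (if i = j then (if i = n - 1 then -1 else 1) else 0) * v $ j)"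
    unfolding B_mat_def using assms by (subst mat_mult_vec_nth) auto
  also have "\<dots> = (\<Sum>j<n. if j = i then (if i = n - 1 then -1 else 1) * v $ j else 0)"
    by (rule sum.cong) auto
  finally show ?thesis
    using assms by simp
qed

text \<open>\<open>A\<^sub>\<sigma>\<close> is diagonally dominant: at an entry of maximal modulus the row equation gives
  \<open>(1 + 2\<sigma>) M \<le> 2\<sigma> M\<close>.\<close>
lemma A_mat_kernel_trivial:
  assumes "\<sigma> \<ge> 0" "v \<in> carrier_vec n" "A_mat n \<sigma> *\<^sub>v v = 0\<^sub>v n"
  shows "v = 0\<^sub>v n"
proof (cases "n = 0")
  case True
  then show ?thesis using assms by auto
next
  case False
  define M where "M = Max ((\<lambda>i. \<bar>v $ i\<bar>) ` {..<n})"
  have le_M: "\<bar>v $ i\<bar> \<le> M" if "i < n" for i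
    unfolding M_def using that by (intro Max_ge) auto
  have "M \<in> (\<lambda>i. \<bar>v $ i\<bar>) ` {..<n}"
    unfolding M_def using False by (intro Max_in) auto
  then obtain m where m: "m < n" "\<bar>v $ m\<bar> = M"
    by auto
  let ?l = "v $ ((m + n - 1) mod n)" and ?r = "v $ ((m + 1) mod n)"
  have "(1 + 2 * \<sigma>) * v $ m = \<sigma> * (?l + ?r)"
    using A_mat_mult_vec_nth[OF m(1) assms(2), of \<sigma>] assms(3) m(1) by simp
  then have "(1 + 2 * \<sigma>) * M = \<sigma> * \<bar>?l + ?r\<bar>"
    using assms(1) m(2) by (metis abs_mult abs_of_nonneg add_nonneg_nonneg mult_nonneg_nonneg
        zero_le_one zero_le_numeral)
  also have "\<dots> \<le> \<sigma> * (2 * M)"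
    using le_M[of "(m + n - 1) mod n"] le_M[of "(m + 1) mod n"] False assms(1)
    by (intro mult_left_mono) (auto intro: order_trans[OF abs_triangle_ineq])
  finally have "M \<le> 0" by (simp add: algebra_simps)
  then have "v $ i = 0" if "i < n" for i
    using le_M[OF that] by simp
  then show ?thesis
    using assms(2) by (intro eq_vecI) auto
qed

lemma A_mat_invertible:
  assumes "\<sigma> \<ge> 0"
  obtains Ai where "mat_inverse (A_mat n \<sigma>) = Some Ai"
proof (cases "mat_inverse (A_mat n \<sigma>)")
  case None
  have "\<not> (\<exists>v. v \<in> carrier_vec n \<and> v \<noteq> 0\<^sub>v n \<and> A_mat n \<sigma> *\<^sub>v v = 0\<^sub>v n)"
    using A_mat_kernel_trivial[OF assms] by blast
  then have "det (A_mat n \<sigma>) \<noteq> 0"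
    unfolding det_0_iff_vec_prod_zero_field[OF A_mat_carrier] .
  then have "A_mat n \<sigma> \<in> Units (ring_mat TYPE(real) n undefined)"
    by (rule det_non_zero_imp_unit[OF A_mat_carrier])
  moreover have "A_mat n \<sigma> \<notin> Units (ring_mat TYPE(real) n undefined)"
    by (rule mat_inverse(1)[OF A_mat_carrier None])
  ultimately show thesis
    by contradiction
next
  case (Some Ai)
  then show thesis
    by (rule that)
qed

lemma neg_unit_eigvec_generalized:
  assumes "\<sigma> \<ge> 0" "neg_unit_eigvec n \<sigma> p"
  obtains \<mu> where "\<mu> < 0" "p \<in> carrier_vec n" "p \<noteq> 0\<^sub>v n" "p \<bullet> p = 1"
    "B_mat n *\<^sub>v p = \<mu> \<cdot>\<^sub>v (A_mat n \<sigma> *\<^sub>v p)"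
proof -
  obtain Ai where Ai: "mat_inverse (A_mat n \<sigma>) = Some Ai"
    using A_mat_invertible[OF assms(1)] .
  have AAi: "A_mat n \<sigma> * Ai = 1\<^sub>m n" and Ai_carrier: "Ai \<in> carrier_mat n n"
    using mat_inverse(2)[OF A_mat_carrier Ai] by auto
  obtain \<mu> where "\<mu> < 0" and ev: "eigenvector (Ai * B_mat n) p \<mu>" and "p \<bullet> p = 1"
    using assms(2) Ai unfolding neg_unit_eigvec_def AinvB_def by auto
  then have p: "p \<in> carrier_vec n" "p \<noteq> 0\<^sub>v n" and ABp: "(Ai * B_mat n) *\<^sub>v p = \<mu> \<cdot>\<^sub>v p"
    using Ai_carrier unfolding eigenvector_def by auto
  have Bp: "B_mat n *\<^sub>v p \<in> carrier_vec n"
    using mult_mat_vec_carrier[OF B_mat_carrier p(1)] .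
  have "B_mat n *\<^sub>v p = (A_mat n \<sigma> * Ai) *\<^sub>v (B_mat n *\<^sub>v p)"
    using Bp unfolding AAi by simp
  also have "\<dots> = A_mat n \<sigma> *\<^sub>v ((Ai * B_mat n) *\<^sub>v p)"
    by (simp add: assoc_mult_mat_vec[OF A_mat_carrier Ai_carrier Bp]
        assoc_mult_mat_vec[OF Ai_carrier B_mat_carrier p(1)])
  also have "\<dots> = \<mu> \<cdot>\<^sub>v (A_mat n \<sigma> *\<^sub>v p)"
    unfolding ABp by (rule mult_mat_vec[OF A_mat_carrier p(1)])
  finally show thesis
    using that \<open>\<mu> < 0\<close> p \<open>p \<bullet> p = 1\<close> by blast
qed

lemma neg_unit_eigvec_rows:
  assumes "\<sigma> \<ge> 0" "neg_unit_eigvec n \<sigma> p"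
  obtains \<mu> where "\<mu> < 0" "p \<in> carrier_vec n" "p \<bullet> p = 1"
    "\<And>i. i < n \<Longrightarrow> (if i = n - 1 then - p $ i else p $ i) =
       \<mu> * ((1 + 2 * \<sigma>) * p $ i - \<sigma> * (p $ ((i + n - 1) mod n) + p $ ((i + 1) mod n)))"
proof -
  obtain \<mu> where \<mu>: "\<mu> < 0" "p \<in> carrier_vec n" "p \<bullet> p = 1"
    and eq: "B_mat n *\<^sub>v p = \<mu> \<cdot>\<^sub>v (A_mat n \<sigma> *\<^sub>v p)"
    using neg_unit_eigvec_generalized[OF assms] .
  have "(B_mat n *\<^sub>v p) $ i = \<mu> * (A_mat n \<sigma> *\<^sub>v p) $ i" if "i < n" for i
    using that unfolding eq by (simp add: carrier_matD(1)[OF A_mat_carrier])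
  then show thesis
    using that \<mu> A_mat_mult_vec_nth B_mat_mult_vec_nth by simp
qed

lemma neg_unit_eigvec_sigma_zero:
  assumes "n \<ge> 2" "neg_unit_eigvec n 0 p"
  shows "p = unit_vec n (n - 1) \<or> p = - unit_vec n (n - 1)"
proof -
  obtain \<mu> where "\<mu> < 0" and p: "p \<in> carrier_vec n" "p \<bullet> p = 1"
    and rows: "\<And>i. i < n \<Longrightarrow> (if i = n - 1 then - p $ i else p $ i) = \<mu> * p $ i"
    using neg_unit_eigvec_rows[of 0 n p] assms(2) by auto
  have zero: "p $ i = 0" if "i < n" "i \<noteq> n - 1" for i
  proof -
    have "(1 - \<mu>) * p $ i = 0"
      using rows[OF that(1)] that(2) by (simp add: algebra_simps)
    then show ?thesis using \<open>\<mu> < 0\<close> by simp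
  qed
  have "p \<bullet> p = (\<Sum>i<n. p $ i * p $ i)"
    unfolding scalar_prod_def using p(1) by (simp add: lessThan_atLeast0)
  also have "\<dots> = (\<Sum>i<n. if i = n - 1 then p $ (n - 1) * p $ (n - 1) else 0)"
    using zero by (intro sum.cong) auto
  finally have "p $ (n - 1) * p $ (n - 1) = 1"
    using p(2) assms(1) by simp
  then have "p $ (n - 1) = 1 \<or> p $ (n - 1) = -1"
    by (simp only: square_eq_1_iff)
  then show ?thesis
    using p(1) zero by (auto intro!: eq_vecI split: if_split_asm)
qed

lemma recurrence_root_gt_one:
  fixes c :: real
  assumes "c > 2"
  obtains r where "r > 1" "r + 1 / r = c"
proof -
  define d where "d = sqrt (c ^ 2 - 4)"
  have "c ^ 2 > 2 ^ 2"
    using assms by (intro power_strict_mono) auto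
  then have "d \<ge> 0" "d ^ 2 = c ^ 2 - 4"
    unfolding d_def by simp_all
  then have "(c + d) / 2 > 1" "(c + d) / 2 * (c - (c + d) / 2) = 1"
    using assms by (simp_all add: field_simps power2_eq_square)
  then show thesis
    using that[of "(c + d) / 2"] by (simp add: field_simps)
qed

text \<open>Solutions of \<open>q\<^sub>k\<^sub>+\<^sub>1 = (r + 1/r) q\<^sub>k - q\<^sub>k\<^sub>-\<^sub>1\<close> are \<open>a r\<^sup>k + b r\<^sup>-\<^sup>k\<close>;
  the boundary condition \<open>q\<^sub>n = q\<^sub>0\<close> forces \<open>(a r\<^sup>n - b)(r\<^sup>n - 1) = 0\<close>.\<close>
lemma periodic_recurrence_symmetric_solution:
  fixes q :: "nat \<Rightarrow> real"
  assumes r: "r > 1" and n: "n \<ge> 1"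
    and rec: "\<And>k. 1 \<le> k \<Longrightarrow> k + 1 \<le> n \<Longrightarrow> q (k + 1) = (r + 1 / r) * q k - q (k - 1)"
    and periodic: "q n = q 0"
  obtains a where "\<And>k. k \<le> n \<Longrightarrow> q k = a * (r ^ k + r ^ (n - k))"
proof -
  define a where "a = (q 1 - q 0 / r) / (r - 1 / r)"
  define b where "b = q 0 - a"
  have "r - 1 / r \<noteq> 0"
    using r less_1_mult[of r r] by (simp add: field_simps)
  then have "a * (r - 1 / r) = q 1 - q 0 / r"
    unfolding a_def by simp
  then have q1: "q 1 = a * r + b / r"
    using r unfolding b_def by (simp add: field_simps)
  have pair: "q k = a * r ^ k + b / r ^ k \<and> q (k + 1) = a * r ^ (k + 1) + b / r ^ (k + 1)"
    if "k + 1 \<le> n" for k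
    using that
  proof (induction k)
    case 0
    then show ?case using q1 by (simp add: b_def)
  next
    case (Suc k)
    then have "q (k + 2) = (r + 1 / r) * (a * r ^ (k + 1) + b / r ^ (k + 1)) - (a * r ^ k + b / r ^ k)"
      using rec[of "k + 1"] by simp
    also have "\<dots> = a * r ^ (k + 2) + b / r ^ (k + 2)"
      using r by (simp add: field_simps power_Suc)
    finally show ?case
      using Suc by (simp add: numeral_2_eq_2)
  qed
  have closed: "q k = a * r ^ k + b / r ^ k" if "k \<le> n" for k
  proof (cases "k + 1 \<le> n")
    case True
    then show ?thesis using pair by blast
  next
    case False
    then have "k = n"
      using that by simp
    then show ?thesis using pair[of "n - 1"] n by simp
  qed
  have "a * r ^ n + b / r ^ n = a + b"
    using closed[of n] closed[of 0] periodic by simp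
  then have "(a * r ^ n - b) * (r ^ n - 1) = 0"
    using r by (simp add: field_simps)
  moreover have "r ^ n > 1"
    using r n by (simp add: one_less_power)
  ultimately have b: "b = a * r ^ n"
    by simp
  have "q k = a * (r ^ k + r ^ (n - k))" if "k \<le> n" for k
  proof -
    have "r ^ n = r ^ k * r ^ (n - k)"
      using that by (simp flip: power_add)
    then show ?thesis
      using closed[OF that] b r by (simp add: field_simps)
  qed
  then show thesis
    using that by blast
qed

lemma neg_unit_eigvec_recurrence:
  assumes "\<sigma> > 0" "neg_unit_eigvec n \<sigma> p"
  obtains c where "c > 2"
    "\<And>j. j + 1 < n \<Longrightarrow> p $ (j + 1) = c * p $ j - p $ ((j + n - 1) mod n)"
proof -
  obtain \<mu> where \<mu>: "\<mu> < 0"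
    and rows: "\<And>i. i < n \<Longrightarrow> (if i = n - 1 then - p $ i else p $ i) =
       \<mu> * ((1 + 2 * \<sigma>) * p $ i - \<sigma> * (p $ ((i + n - 1) mod n) + p $ ((i + 1) mod n)))"
    using neg_unit_eigvec_rows[of \<sigma> n p] assms by auto
  define c where "c = 2 + (1 - 1 / \<mu>) / \<sigma>"
  have "c > 2"
    unfolding c_def using \<mu> assms(1) by (simp add: divide_neg_pos)
  moreover have "p $ (j + 1) = c * p $ j - p $ ((j + n - 1) mod n)" if "j + 1 < n" for j
  proof -
    have "p $ j = \<mu> * ((1 + 2 * \<sigma>) * p $ j - \<sigma> * (p $ ((j + n - 1) mod n) + p $ (j + 1)))"
      using rows[of j] that by (simp split: if_split_asm)
    then show ?thesis
      using \<mu> assms(1) unfolding c_def by (simp add: field_simps)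
  qed
  ultimately show thesis
    using that by blast
qed

lemma neg_unit_eigvec_symmetric_form:
  assumes n: "n \<ge> 2" and \<sigma>: "\<sigma> > 0" and p: "neg_unit_eigvec n \<sigma> p"
  shows "\<exists>r b1. r > 1 \<and> b1 \<noteq> 0 \<and> (\<forall>k\<in>{1..n}. p $ (k - 1) = b1 * (r ^ k + r ^ (n - k)))"
proof -
  obtain c where "c > 2"
    and rec_p: "\<And>j. j + 1 < n \<Longrightarrow> p $ (j + 1) = c * p $ j - p $ ((j + n - 1) mod n)"
    using neg_unit_eigvec_recurrence[OF \<sigma> p] by blast
  obtain r where r: "r > 1" "r + 1 / r = c"
    using recurrence_root_gt_one[OF \<open>c > 2\<close>] by blast
  have p_carrier: "p \<in> carrier_vec n" and "p \<noteq> 0\<^sub>v n"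
    using neg_unit_eigvec_generalized[of \<sigma> n p] \<sigma> p by auto
  text \<open>Shifting the index by one moves the exceptional last row to the boundary \<open>q\<^sub>0 = q\<^sub>n\<close>.\<close>
  define q where "q k = p $ ((k + n - 1) mod n)" for k
  have q_p: "q k = p $ (k - 1)" if "1 \<le> k" "k \<le> n" for k
  proof -
    have "(k + n - 1) mod n = (k - 1) mod n"
      using that by (metis Nat.add_diff_assoc2 mod_add_self2)
    then show ?thesis
      unfolding q_def using that by simp
  qed
  have rec: "q (k + 1) = (r + 1 / r) * q k - q (k - 1)" if "1 \<le> k" "k + 1 \<le> n" for k
    using rec_p[of "k - 1"] q_p[of k] q_p[of "k + 1"] that unfolding r(2) q_def[of "k - 1"] by simp
  have "(n + n - 1) mod n = (n - 1) mod n"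
    using n by (metis Nat.add_diff_assoc2 mod_add_self2 le_trans one_le_numeral)
  then have periodic: "q n = q 0"
    unfolding q_def by simp
  have "1 \<le> n"
    using n by simp
  then obtain a where a: "\<And>k. k \<le> n \<Longrightarrow> q k = a * (r ^ k + r ^ (n - k))"
    using periodic_recurrence_symmetric_solution[of r n q, OF r(1) _ rec periodic] by blast
  have p_a: "\<forall>k\<in>{1..n}. p $ (k - 1) = a * (r ^ k + r ^ (n - k))"
    using a q_p by simp
  have "a \<noteq> 0"
  proof
    assume "a = 0"
    then have "p $ i = 0" if "i < n" for i
      using p_a that by (auto dest: bspec[of _ _ "Suc i"])
    then have "p = 0\<^sub>v n"
      using p_carrier by (intro eq_vecI) auto
    with \<open>p \<noteq> 0\<^sub>v n\<close> show False ..
  qed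
  then show ?thesis
    using r(1) p_a by blast
qed

lemma neg_unit_eigvec_constant_sign:
  assumes "n \<ge> 2" "\<sigma> > 0" "neg_unit_eigvec n \<sigma> p"
  shows "(\<forall>k<n. p $ k > 0) \<or> (\<forall>k<n. p $ k < 0)"
proof -
  obtain r b1 where "r > 1" "b1 \<noteq> 0"
    and p: "\<forall>k\<in>{1..n}. p $ (k - 1) = b1 * (r ^ k + r ^ (n - k))"
    using neg_unit_eigvec_symmetric_form[OF assms] by blast
  have p_nth: "p $ k = b1 * (r ^ Suc k + r ^ (n - Suc k))" if "k < n" for k
    using p that by (auto dest: bspec[of _ _ "Suc k"])
  have "r ^ Suc k + r ^ (n - Suc k) > 0" for k
    using \<open>r > 1\<close> by (simp add: add_pos_pos)
  then show ?thesis
    using \<open>b1 \<noteq> 0\<close> p_nth by (cases "b1 > 0") (simp_all add: mult_neg_pos)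
qed

lemma neg_unit_eigvec_sign_normalized:
  assumes "n \<ge> 2" "\<sigma> \<ge> 0" "neg_unit_eigvec n \<sigma> p"
  obtains s :: real where "\<bar>s\<bar> = 1" "\<And>k. k < n \<Longrightarrow> s * p $ k \<ge> 0" "s * p $ (n - 1) > 0"
proof -
  have last: "n - 1 < n"
    using assms(1) by simp
  consider "p = unit_vec n (n - 1)" | "p = - unit_vec n (n - 1)"
    | "\<forall>k<n. p $ k > 0" | "\<forall>k<n. p $ k < 0"
    using neg_unit_eigvec_sigma_zero[OF assms(1)] neg_unit_eigvec_constant_sign[OF assms(1) _ assms(3)]
      assms(2,3) by (cases "\<sigma> = 0") auto
  then show thesis
  proof cases
    case 1
    then show thesis using last by (intro that[of 1]) auto
  next
    case 2
    then show thesis using last by (intro that[of "-1"]) auto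
  next
    case 3
    then show thesis using last by (intro that[of 1]) (auto simp: less_imp_le)
  next
    case 4
    then show thesis using last by (intro that[of "-1"]) (auto simp: less_imp_le)
  qed
qed

lemma sum_mult_pos_if_nonneg:
  fixes x y :: "nat \<Rightarrow> real"
  assumes "\<And>k. k < n \<Longrightarrow> x k \<ge> 0" "\<And>k. k < n \<Longrightarrow> y k \<ge> 0" "j < n" "x j > 0" "y j > 0"
  shows "(\<Sum>k<n. x k * y k) > 0"
proof -
  have "0 < x j * y j" using assms by simp
  also have "\<dots> \<le> (\<Sum>k<n. x k * y k)"
    using assms by (intro member_le_sum) auto
  finally show ?thesis .
qed

lemma neg_unit_eigvec_scalar_prod_nonzero:
  assumes n: "n \<ge> 2" and "\<sigma> \<ge> 0" "\<sigma>' \<ge> 0" and p: "neg_unit_eigvec n \<sigma> p"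
    and p': "neg_unit_eigvec n \<sigma>' p'"
  shows "p \<bullet> p' \<noteq> 0"
proof -
  obtain s where s: "\<bar>s\<bar> = 1" "\<And>k. k < n \<Longrightarrow> s * p $ k \<ge> 0" "s * p $ (n - 1) > 0"
    using neg_unit_eigvec_sign_normalized[OF n \<open>\<sigma> \<ge> 0\<close> p] by blast
  obtain s' where s': "\<bar>s'\<bar> = 1" "\<And>k. k < n \<Longrightarrow> s' * p' $ k \<ge> 0" "s' * p' $ (n - 1) > 0"
    using neg_unit_eigvec_sign_normalized[OF n \<open>\<sigma>' \<ge> 0\<close> p'] by blast
  have "p' \<in> carrier_vec n"
    using neg_unit_eigvec_generalized[OF \<open>\<sigma>' \<ge> 0\<close> p'] by blast
  then have "p \<bullet> p' = (\<Sum>k<n. p $ k * p' $ k)"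
    unfolding scalar_prod_def by (simp add: lessThan_atLeast0)
  then have "s * s' * (p \<bullet> p') = (\<Sum>k<n. (s * p $ k) * (s' * p' $ k))"
    by (simp add: sum_distrib_left mult_ac)
  also have "\<dots> > 0"
    using s s' n by (intro sum_mult_pos_if_nonneg[where j = "n - 1"]) auto
  finally show ?thesis
    by auto
qed

theorem mainTheorem3:
  fixes n :: nat
  assumes "n \<ge> 2"
  shows
    "(\<forall>p. neg_unit_eigvec n 0 p \<longrightarrow>
         p = unit_vec n (n - 1) \<or> p = - unit_vec n (n - 1))
   \<and> (\<forall>\<sigma> p. \<sigma> > 0 \<longrightarrow> neg_unit_eigvec n \<sigma> p \<longrightarrow>
         (\<forall>k<n. p $ k \<noteq> 0)
       \<and> ((\<forall>k<n. p $ k > 0) \<or> (\<forall>k<n. p $ k < 0))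
       \<and> (\<exists>r b1. r > 1 \<and> b1 \<noteq> 0 \<and>
            (\<forall>k\<in>{1..n}. p $ (k - 1) = b1 * (r ^ k + r ^ (n - k)))))
   \<and> (\<forall>\<sigma> \<sigma>' p p'. \<sigma> \<ge> 0 \<longrightarrow> \<sigma>' \<ge> 0 \<longrightarrow>
         neg_unit_eigvec n \<sigma> p \<longrightarrow> neg_unit_eigvec n \<sigma>' p' \<longrightarrow> p \<bullet> p' \<noteq> 0)"
proof (intro conjI allI impI)
  fix p
  assume "neg_unit_eigvec n 0 p"
  then show "p = unit_vec n (n - 1) \<or> p = - unit_vec n (n - 1)"
    by (rule neg_unit_eigvec_sigma_zero[OF assms])
next
  fix \<sigma> :: real and p
  assume "\<sigma> > 0" "neg_unit_eigvec n \<sigma> p"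
  then show sign: "(\<forall>k<n. p $ k > 0) \<or> (\<forall>k<n. p $ k < 0)"
    and "\<exists>r b1. r > 1 \<and> b1 \<noteq> 0 \<and> (\<forall>k\<in>{1..n}. p $ (k - 1) = b1 * (r ^ k + r ^ (n - k)))"
    by (rule neg_unit_eigvec_constant_sign[OF assms], rule neg_unit_eigvec_symmetric_form[OF assms])
  fix k
  assume "k < n"
  then show "p $ k \<noteq> 0"
    using sign by auto
next
  fix \<sigma> \<sigma>' :: real and p p'
  assume "\<sigma> \<ge> 0" "\<sigma>' \<ge> 0" "neg_unit_eigvec n \<sigma> p" "neg_unit_eigvec n \<sigma>' p'"
  then show "p \<bullet> p' \<noteq> 0"
    by (rule neg_unit_eigvec_scalar_prod_nonzero[OF assms])
qed

end
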